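(* (Interval Stabilization) Let $X$ be an extensible marked Dynkin diagram and let $\lambda_1,\lambda_2\in\mathcal H_2^+$ with $\lambda_1\ge\lambda_2$. Let $I(\lambda_1,\lambda_2)=\{\gamma\in\mathcal H_2^+:\lambda_1\ge\gamma\ge\lambda_2\}$ and, for $n$ larger than the lengths of $\lambda_1$ and $\lambda_2$, let $I^{(n)}(\lambda_1,\lambda_2)=\{\beta\in P^+(X_n):\lambda_1^{(n)}\ge\beta\ge\lambda_2^{(n)}\}$. Then: (1) $I(\lambda_1,\lambda_2)$ is a finite set; (2) there exists $N$ such that for all $n\ge N$, $I^{(n)}(\lambda_1,\lambda_2)=\{\gamma^{(n)}:\gamma\in I(\lambda_1,\lambda_2)\}$.
   Context: Marked Dynkin diagram $X$: nodes $1,\dots,d$, node $d$ distinguished, symmetrizable generalized Cartan matrix $C(X)$. For $n\ge d$, $X_n$ is obtained by attaching a simply-laced chain of new nodes $d+1,\dots,n$ to node $d$ ($C(X_n)$ has $C(X)$ as upper-left block, $2$ on the remaining diagonal, $-1$ at $(i,i+1),(i+1,i)$ for $d\le i<n$, $0$ elsewhere); $X_{d-1}$ is $X$ with node $d$ deleted; $\det(Y)$ is the determinant of the Cartan matrix of $Y$; $\Delta$ is the common difference of the arithmetic progression $\det(X_n)$, $n\ge d$; $X$ is extensible if $\Delta\ne0$, $\det X\ne0$, $\gcd(\Delta,\det X)=1$. $\mathfrak g(X_n)$: simple roots $\alpha_i^{(n)}$, coroots $\check\alpha_i^{(n)}$, fundamental weights $\omega_i^{(n)}$, $\overline{\omega}_i^{(n)}=\omega_{n-i+1}^{(n)}$,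 $Q^+(X_n)=\bigoplus\mathbb Z_{\ge0}\alpha_i^{(n)}$, dominant weights $P^+(X_n)=\{\beta:\beta(\check\alpha_i^{(n)})\in\mathbb Z_{\ge0}\ \forall i\}$; on $\mathfrak h^*(X_n)$, $\beta\ge\beta'$ means $\beta-\beta'\in Q^+(X_n)$. $\mathcal H_1$: finitely supported integer sequences ($\mathcal H_1^+$: nonnegative), $\ell(x)=\max\{i:x_i\ne0\}$, $\mathcal H_2=\mathcal H_1^2$, $\mathcal H_2^+=(\mathcal H_1^+)^2$; for $\lambda=(x,y)$, length $\ell(\lambda,X)=\ell(y)+\max(d,\ell(x))$, and $\lambda^{(n)}=\sum x_i\omega_i^{(n)}+\sum y_i\overline{\omega}_i^{(n)}$ for $n\ge\ell(\lambda,X)$. $a_i=\det(X)(C(X)^{-1})_{d\,i}$ ($i\le d$), $a_i=\det(X_{i-1})$ ($i>d$); $|\lambda|_X=\sum a_ix_i-\Delta\sum i\,y_i$. Partial order on $\mathcal H_2$: $\lambda_1\ge\lambda_2$ iff $|\lambda_1|_X=|\lambda_2|_X$ and $\lambda_1^{(n)}-\lambda_2^{(n)}\in Q^+(X_n)$ for all sufficiently large $n$. *)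

theory Defs
  imports Complex_Main "HOL-Combinatorics.Permutations"
begin

text \<open>Matrices are functions nat => nat => int, indices 1..n.
  A marked Dynkin diagram X is given by (d, C), where C restricted to {1..d}x{1..d}
  is its Cartan matrix; node d is the distinguished node.\<close>

definition detn :: "nat \<Rightarrow> (nat \<Rightarrow> nat \<Rightarrow> int) \<Rightarrow> int" where
  "detn n A = (\<Sum>p\<in>{p. p permutes {1..n}}. sign p * (\<Prod>i\<in>{1..n}. A i (p i)))"

definition gcm :: "nat \<Rightarrow> (nat \<Rightarrow> nat \<Rightarrow> int) \<Rightarrow> bool" where
  "gcm d C \<longleftrightarrow> (\<forall>i\<in>{1..d}. C i i = 2)
     \<and> (\<forall>i\<in>{1..d}. \<forall>j\<in>{1..d}. i \<noteq> j \<longrightarrow> C i j \<le> 0)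
     \<and> (\<forall>i\<in>{1..d}. \<forall>j\<in>{1..d}. C i j = 0 \<longleftrightarrow> C j i = 0)"

definition symmetrizable :: "nat \<Rightarrow> (nat \<Rightarrow> nat \<Rightarrow> int) \<Rightarrow> bool" where
  "symmetrizable d C \<longleftrightarrow> (\<exists>e :: nat \<Rightarrow> rat. (\<forall>i\<in>{1..d}. e i > 0)
     \<and> (\<forall>i\<in>{1..d}. \<forall>j\<in>{1..d}. e i * of_int (C i j) = e j * of_int (C j i)))"

text \<open>Cartan matrix of X_n (chain d+1..n attached to node d).\<close>
definition cartan_ext :: "nat \<Rightarrow> (nat \<Rightarrow> nat \<Rightarrow> int) \<Rightarrow> nat \<Rightarrow> nat \<Rightarrow> int" where
  "cartan_ext d C i j =
     (if i \<le> d \<and> j \<le> d then C i j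
      else if i = j then 2
      else if (j = i + 1 \<or> i = j + 1) \<and> d \<le> min i j then -1
      else 0)"

text \<open>det(X_n), meaningful for n >= d-1 (n = d-1 gives X with node d deleted).\<close>
definition Xdet :: "nat \<Rightarrow> (nat \<Rightarrow> nat \<Rightarrow> int) \<Rightarrow> nat \<Rightarrow> int" where
  "Xdet d C n = detn n (cartan_ext d C)"

definition Delta :: "nat \<Rightarrow> (nat \<Rightarrow> nat \<Rightarrow> int) \<Rightarrow> int" where
  "Delta d C = Xdet d C (d + 1) - Xdet d C d"

definition extensible :: "nat \<Rightarrow> (nat \<Rightarrow> nat \<Rightarrow> int) \<Rightarrow> bool" where
  "extensible d C \<longleftrightarrow> Delta d C \<noteq> 0 \<and> Xdet d C d \<noteq> 0 \<and> gcd (Delta d C) (Xdet d C d) = 1"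

definition skip :: "nat \<Rightarrow> nat \<Rightarrow> nat" where
  "skip r i = (if i < r then i else i + 1)"

definition adjugate :: "nat \<Rightarrow> (nat \<Rightarrow> nat \<Rightarrow> int) \<Rightarrow> nat \<Rightarrow> nat \<Rightarrow> int" where
  "adjugate n A r c = (-1) ^ (r + c) * detn (n - 1) (\<lambda>i j. A (skip c i) (skip r j))"

text \<open>a_i = det(X) (C(X)^{-1})_{d i} = adj(C(X))_{d i} for i <= d; a_i = det(X_{i-1}) for i > d.\<close>
definition acoef :: "nat \<Rightarrow> (nat \<Rightarrow> nat \<Rightarrow> int) \<Rightarrow> nat \<Rightarrow> int" where
  "acoef d C i = (if i \<le> d then adjugate d C d i else Xdet d C (i - 1))"

text \<open>H_1: finitely supported integer sequences x_1, x_2, ... (index 0 unused, set to 0).\<close>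
definition H1 :: "(nat \<Rightarrow> int) set" where
  "H1 = {x. finite {i. x i \<noteq> 0} \<and> x 0 = 0}"

definition H1p :: "(nat \<Rightarrow> int) set" where
  "H1p = {x \<in> H1. \<forall>i. x i \<ge> 0}"

definition H2 :: "((nat \<Rightarrow> int) \<times> (nat \<Rightarrow> int)) set" where
  "H2 = H1 \<times> H1"

definition H2p :: "((nat \<Rightarrow> int) \<times> (nat \<Rightarrow> int)) set" where
  "H2p = H1p \<times> H1p"

definition seqlen :: "(nat \<Rightarrow> int) \<Rightarrow> nat" where
  "seqlen x = (if \<exists>i. x i \<noteq> 0 then Max {i. x i \<noteq> 0} else 0)"

definition hlen :: "nat \<Rightarrow> (nat \<Rightarrow> int) \<times> (nat \<Rightarrow> int) \<Rightarrow> nat" where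
  "hlen d lam = seqlen (snd lam) + max d (seqlen (fst lam))"

definition hnorm :: "nat \<Rightarrow> (nat \<Rightarrow> nat \<Rightarrow> int) \<Rightarrow> (nat \<Rightarrow> int) \<times> (nat \<Rightarrow> int) \<Rightarrow> int" where
  "hnorm d C lam = (\<Sum>i\<in>{1..seqlen (fst lam)}. acoef d C i * fst lam i)
       - Delta d C * (\<Sum>i\<in>{1..seqlen (snd lam)}. int i * snd lam i)"

text \<open>Weights of g(X_n) are represented by their values on the simple coroots:
  beta is encoded as the vector (beta(coroot_i))_{i=1..n} (zero outside 1..n).
  Convention (Kac): alpha_j(coroot_i) = C(X_n)_{ij}.
  lambda^(n) = sum x_i omega_i + sum y_i omega_{n-i+1}.\<close>
definition wt :: "nat \<Rightarrow> (nat \<Rightarrow> int) \<times> (nat \<Rightarrow> int) \<Rightarrow> nat \<Rightarrow> int" where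
  "wt n lam i = (if 1 \<le> i \<and> i \<le> n then fst lam i + snd lam (n + 1 - i) else 0)"

definition dominant :: "nat \<Rightarrow> (nat \<Rightarrow> int) \<Rightarrow> bool" where
  "dominant n b \<longleftrightarrow> (\<forall>i\<in>{1..n}. b i \<ge> 0) \<and> (\<forall>i. i \<notin> {1..n} \<longrightarrow> b i = 0)"

text \<open>beta >= beta' in h^*(X_n): beta - beta' is a nonnegative integer combination of simple roots.\<close>
definition Qge :: "nat \<Rightarrow> (nat \<Rightarrow> nat \<Rightarrow> int) \<Rightarrow> nat \<Rightarrow> (nat \<Rightarrow> int) \<Rightarrow> (nat \<Rightarrow> int) \<Rightarrow> bool" where
  "Qge d C n b b' \<longleftrightarrow> (\<exists>c :: nat \<Rightarrow> nat. \<forall>i\<in>{1..n}.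
      b i - b' i = (\<Sum>j\<in>{1..n}. cartan_ext d C i j * int (c j)))"

definition Hge :: "nat \<Rightarrow> (nat \<Rightarrow> nat \<Rightarrow> int) \<Rightarrow> (nat \<Rightarrow> int) \<times> (nat \<Rightarrow> int)
    \<Rightarrow> (nat \<Rightarrow> int) \<times> (nat \<Rightarrow> int) \<Rightarrow> bool" where
  "Hge d C lam1 lam2 \<longleftrightarrow> hnorm d C lam1 = hnorm d C lam2
     \<and> (\<exists>N. \<forall>n\<ge>N. Qge d C n (wt n lam1) (wt n lam2))"

definition Ival :: "nat \<Rightarrow> (nat \<Rightarrow> nat \<Rightarrow> int) \<Rightarrow> (nat \<Rightarrow> int) \<times> (nat \<Rightarrow> int)
    \<Rightarrow> (nat \<Rightarrow> int) \<times> (nat \<Rightarrow> int) \<Rightarrow> ((nat \<Rightarrow> int) \<times> (nat \<Rightarrow> int)) set" where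
  "Ival d C lam1 lam2 = {g \<in> H2p. Hge d C lam1 g \<and> Hge d C g lam2}"

definition Ivaln :: "nat \<Rightarrow> (nat \<Rightarrow> nat \<Rightarrow> int) \<Rightarrow> nat \<Rightarrow> (nat \<Rightarrow> int) \<times> (nat \<Rightarrow> int)
    \<Rightarrow> (nat \<Rightarrow> int) \<times> (nat \<Rightarrow> int) \<Rightarrow> (nat \<Rightarrow> int) set" where
  "Ivaln d C n lam1 lam2 = {b. dominant n b \<and> Qge d C n (wt n lam1) b \<and> Qge d C n b (wt n lam2)}"

end

theory Submission
  imports Defs "Jordan_Normal_Form.Determinant"
begin

text \<open>Let beta be dominant with lam1^(n) >= beta >= lam2^(n), witnessed by c, c' >= 0 with
  C(X_n) c = lam1^(n) - beta and C(X_n) c' = beta - lam2^(n). Their sum solves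
  C(X_n) e = lam1^(n) - lam2^(n). Pairing with a = det(X_n) (last row of C(X_n)^-1) and using
  |lam1| = |lam2| fixes the last entry of e, and the recurrence along the chain then makes e
  constant on the middle of the chain. There c is convex (beta >= 0 and lam1^(n) vanishes)
  with values between 0 and that constant, so c and c' are flat and beta vanishes on a
  stretch whose distance from both ends does not depend on n. Thus beta = gamma^(n) for a
  gamma supported below fixed cuts, and doubling a node in the flat stretch transports
  witnesses between X_n and X_(n+1): membership of gamma^(n) in the interval does not depend
  on n. Finally |gamma| = |lam1|, because det(X_n) divides their difference for all large n
  while |det(X_n)| grows linearly.\<close>

section \<open>Determinants and adjugates\<close>

definition mat_of_fun :: "nat \<Rightarrow> (nat \<Rightarrow> nat \<Rightarrow> int) \<Rightarrow> int mat" where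
  "mat_of_fun n A = mat n n (\<lambda>(i, j). A (Suc i) (Suc j))"

text \<open>detn permutes {1..n} while det permutes {0..<n}; bordering by a unit entry at (0, 0)
  mediates between the two.\<close>
definition bordered_mat :: "nat \<Rightarrow> (nat \<Rightarrow> nat \<Rightarrow> int) \<Rightarrow> int mat" where
  "bordered_mat n A = mat (Suc n) (Suc n)
     (\<lambda>(i, j). if i = 0 \<and> j = 0 then 1 else if i = 0 \<or> j = 0 then 0 else A i j)"

lemma detn_eq_det_bordered_mat: "detn n A = det (bordered_mat n A)"
proof -
  let ?S = "{p. p permutes {0..<Suc n}}"
  let ?T = "{p. p permutes {1..n}}"
  let ?f = "\<lambda>p. signof p * (\<Prod>i = 0..<Suc n. bordered_mat n A $$ (i, p i))"
  have T_sub_S: "?T \<subseteq> ?S"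
  proof
    fix p assume "p \<in> ?T"
    then have "p permutes {1..n}" by simp
    then have "p permutes {0..<Suc n}" by (rule permutes_subset) auto
    then show "p \<in> ?S" by simp
  qed
  have vanish: "?f p = 0" if "p \<in> ?S - ?T" for p
  proof -
    from that have p: "p permutes {0..<Suc n}" and not_T: "\<not> p permutes {1..n}" by auto
    have "p 0 \<noteq> 0"
    proof
      assume "p 0 = 0"
      with p have "p permutes {1..n}"
        unfolding permutes_def by (metis atLeastLessThanSuc_atLeastAtMost atLeastAtMost_iff
            One_nat_def le_zero_eq not_less_eq_eq)
      with not_T show False ..
    qed
    moreover have "p 0 < Suc n" using permutes_in_image[OF p, of 0] by auto
    ultimately have "bordered_mat n A $$ (0, p 0) = 0" unfolding bordered_mat_def by auto
    then have "(\<Prod>i = 0..<Suc n. bordered_mat n A $$ (i, p i)) = 0"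
      by (intro prod_zero bexI[of _ 0]) auto
    then show ?thesis by simp
  qed
  have "det (bordered_mat n A) = sum ?f ?S" unfolding det_def bordered_mat_def by simp
  also have "\<dots> = sum ?f ?T"
    by (rule sum.mono_neutral_right[OF _ T_sub_S]) (use vanish finite_permutations in blast)+
  also have "\<dots> = (\<Sum>p\<in>?T. sign p * (\<Prod>i\<in>{1..n}. A i (p i)))"
  proof (rule sum.cong[OF refl])
    fix p assume "p \<in> ?T"
    then have p: "p permutes {1..n}" by auto
    have "{0..<Suc n} = insert 0 {1..n}" by auto
    then have "(\<Prod>i = 0..<Suc n. bordered_mat n A $$ (i, p i))
        = bordered_mat n A $$ (0, p 0) * (\<Prod>i\<in>{1..n}. bordered_mat n A $$ (i, p i))"
      by simp
    also have "bordered_mat n A $$ (0, p 0) = 1"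
      using permutes_not_in[OF p, of 0] unfolding bordered_mat_def by auto
    also have "(\<Prod>i\<in>{1..n}. bordered_mat n A $$ (i, p i)) = (\<Prod>i\<in>{1..n}. A i (p i))"
    proof (rule prod.cong[OF refl])
      fix i assume "i \<in> {1..n}"
      then show "bordered_mat n A $$ (i, p i) = A i (p i)"
        using permutes_in_image[OF p, of i] by (auto simp: bordered_mat_def)
    qed
    finally show "?f p = sign p * (\<Prod>i\<in>{1..n}. A i (p i))" by simp
  qed
  finally show ?thesis unfolding detn_def by simp
qed

lemma det_bordered_mat: "det (bordered_mat n A) = det (mat_of_fun n A)"
proof -
  have B: "bordered_mat n A \<in> carrier_mat (Suc n) (Suc n)" unfolding bordered_mat_def by simp
  have "det (bordered_mat n A) = (\<Sum>j<Suc n. bordered_mat n A $$ (0, j) * cofactor (bordered_mat n A) 0 j)"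
    by (rule laplace_expansion_row[OF B]) simp
  also have "\<dots> = cofactor (bordered_mat n A) 0 0"
    by (subst sum.mono_neutral_right[of _ "{0}"]) (auto simp: bordered_mat_def)
  also have "mat_delete (bordered_mat n A) 0 0 = mat_of_fun n A"
    by (rule eq_matI) (auto simp: mat_delete_def bordered_mat_def mat_of_fun_def)
  then have "cofactor (bordered_mat n A) 0 0 = det (mat_of_fun n A)" by (simp add: cofactor_def)
  finally show ?thesis .
qed

lemma detn_eq_det: "detn n A = det (mat_of_fun n A)"
  using detn_eq_det_bordered_mat det_bordered_mat by simp

lemma detn_cong:
  "(\<And>i j. i \<in> {1..n} \<Longrightarrow> j \<in> {1..n} \<Longrightarrow> A i j = B i j) \<Longrightarrow> detn n A = detn n B"
  unfolding detn_eq_det by (rule arg_cong[where f = det]) (auto simp: mat_of_fun_def)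

lemma adjugate_eq_adj_mat:
  assumes "r \<in> {1..n}" "c \<in> {1..n}"
  shows "adjugate n A r c = adj_mat (mat_of_fun n A) $$ (r - 1, c - 1)"
proof -
  have "mat_delete (mat_of_fun n A) (c - 1) (r - 1) = mat_of_fun (n - 1) (\<lambda>i j. A (skip c i) (skip r j))"
    by (rule eq_matI) (use assms in \<open>auto simp: mat_delete_def mat_of_fun_def skip_def\<close>)
  moreover have "r + c = ((c - 1) + (r - 1)) + 2" using assms by auto
  then have "(-1::int) ^ (r + c) = (-1) ^ ((c - 1) + (r - 1))" by (simp add: power_add)
  ultimately show ?thesis using assms
    unfolding adjugate_def adj_mat_def cofactor_def detn_eq_det by (auto simp: mat_of_fun_def)
qed

lemma adjugate_mult:
  assumes k: "k \<in> {1..n}" and j: "j \<in> {1..n}"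
  shows "(\<Sum>i\<in>{1..n}. adjugate n A k i * A i j) = (if k = j then detn n A else 0)"
proof -
  let ?M = "mat_of_fun n A"
  have M: "?M \<in> carrier_mat n n" by (simp add: mat_of_fun_def)
  have "(\<Sum>i\<in>{1..n}. adjugate n A k i * A i j) = (\<Sum>i<n. adjugate n A k (Suc i) * A (Suc i) j)"
    by (rule sum.reindex_bij_witness[of _ Suc "\<lambda>i. i - 1"]) auto
  also have "\<dots> = (\<Sum>i<n. adj_mat ?M $$ (k - 1, i) * ?M $$ (i, j - 1))"
    using k j by (intro sum.cong) (auto simp: adjugate_eq_adj_mat mat_of_fun_def)
  also have "\<dots> = (adj_mat ?M * ?M) $$ (k - 1, j - 1)"
    using k j adj_mat(1)[OF M] M by (auto simp: scalar_prod_def times_mat_def atLeast0LessThan)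
  also have "\<dots> = (if k = j then det ?M else 0)"
    unfolding adj_mat(3)[OF M] using k j by auto
  finally show ?thesis by (simp add: detn_eq_det)
qed

lemma adjugate_mult_vec:
  assumes "k \<in> {1..n}"
  shows "(\<Sum>i\<in>{1..n}. adjugate n A k i * (\<Sum>j\<in>{1..n}. A i j * e j)) = detn n A * e k"
proof -
  have "(\<Sum>i\<in>{1..n}. adjugate n A k i * (\<Sum>j\<in>{1..n}. A i j * e j))
      = (\<Sum>i\<in>{1..n}. \<Sum>j\<in>{1..n}. e j * (adjugate n A k i * A i j))"
    by (simp add: sum_distrib_left algebra_simps)
  also have "\<dots> = (\<Sum>j\<in>{1..n}. e j * (\<Sum>i\<in>{1..n}. adjugate n A k i * A i j))"
    by (subst sum.swap) (simp add: sum_distrib_left)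
  also have "\<dots> = (\<Sum>j\<in>{1..n}. if k = j then e j * detn n A else 0)"
  proof (rule sum.cong[OF refl])
    fix j assume "j \<in> {1..n}"
    then show "e j * (\<Sum>i\<in>{1..n}. adjugate n A k i * A i j) = (if k = j then e j * detn n A else 0)"
      using adjugate_mult[OF assms, of j A] by simp
  qed
  also have "\<dots> = detn n A * e k" using assms by simp
  finally show ?thesis .
qed

section \<open>The Cartan matrices of the extended diagrams\<close>

lemma cartan_ext_eq_0:
  "d < i \<or> d < j \<Longrightarrow> i \<noteq> j \<Longrightarrow> j \<noteq> Suc i \<Longrightarrow> i \<noteq> Suc j \<Longrightarrow> cartan_ext d C i j = 0"
  by (auto simp: cartan_ext_def)

lemma cartan_ext_Suc_Suc: "d < i \<Longrightarrow> cartan_ext d C (Suc i) (Suc j) = cartan_ext d C i j"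
  by (auto simp: cartan_ext_def)

lemma Xdet_Suc_Suc:
  assumes "d \<le> Suc k"
  shows "Xdet d C (Suc (Suc k)) = 2 * Xdet d C (Suc k) - Xdet d C k"
proof -
  let ?A = "cartan_ext d C"
  let ?M = "mat_of_fun (Suc (Suc k)) ?A"
  have M: "?M \<in> carrier_mat (Suc (Suc k)) (Suc (Suc k))" by (simp add: mat_of_fun_def)
  have "det ?M = (\<Sum>j<Suc (Suc k). ?M $$ (Suc k, j) * cofactor ?M (Suc k) j)"
    by (rule laplace_expansion_row[OF M]) simp
  also have "\<dots> = (\<Sum>j\<in>{k, Suc k}. ?M $$ (Suc k, j) * cofactor ?M (Suc k) j)"
    by (rule sum.mono_neutral_right)
      (use assms in \<open>auto simp: mat_of_fun_def intro!: cartan_ext_eq_0\<close>)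
  also have "\<dots> = - cofactor ?M (Suc k) k + 2 * cofactor ?M (Suc k) (Suc k)"
    using assms by (simp add: mat_of_fun_def cartan_ext_def)
  also have "cofactor ?M (Suc k) (Suc k) = Xdet d C (Suc k)"
  proof -
    have "mat_delete ?M (Suc k) (Suc k) = mat_of_fun (Suc k) ?A"
      by (rule eq_matI) (auto simp: mat_delete_def mat_of_fun_def)
    then show ?thesis by (simp add: cofactor_def Xdet_def detn_eq_det)
  qed
  also have "cofactor ?M (Suc k) k = Xdet d C k"
  proof -
    let ?M' = "mat_delete ?M (Suc k) k"
    have M': "?M' \<in> carrier_mat (Suc k) (Suc k)"
      unfolding carrier_mat_def by (simp add: mat_of_fun_def)
    have "det ?M' = (\<Sum>i<Suc k. ?M' $$ (i, k) * cofactor ?M' i k)"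
      by (rule laplace_expansion_column[OF M']) simp
    also have "\<dots> = (\<Sum>i\<in>{k}. ?M' $$ (i, k) * cofactor ?M' i k)"
      by (rule sum.mono_neutral_right)
        (use assms in \<open>auto simp: mat_of_fun_def mat_delete_def intro!: cartan_ext_eq_0\<close>)
    also have "\<dots> = - cofactor ?M' k k"
      using assms by (simp add: mat_of_fun_def mat_delete_def cartan_ext_def)
    also have "mat_delete ?M' k k = mat_of_fun k ?A"
      by (rule eq_matI) (auto simp: mat_delete_def mat_of_fun_def)
    then have "cofactor ?M' k k = Xdet d C k" by (simp add: cofactor_def Xdet_def detn_eq_det)
    finally show ?thesis by (simp add: cofactor_def power_add)
  qed
  finally show ?thesis by (simp add: Xdet_def detn_eq_det)
qed

lemma Xdet_linear:
  assumes "1 \<le> d" and "d \<le> Suc k"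
  shows "Xdet d C k = Xdet d C d + (int k - int d) * Delta d C"
  using assms(2)
proof (induction k rule: less_induct)
  case (less k)
  consider "k = d - 1" | "k = d" | "k = Suc d" | k' where "k = Suc (Suc k')" "d \<le> k'"
    using less.prems by (metis Suc_diff_Suc Suc_le_D diff_Suc_1 le_SucE not_less_eq_eq)
  then show ?case
  proof cases
    case 1
    then show ?thesis
      using Xdet_Suc_Suc[of d "d - 1" C] assms(1) by (simp add: Delta_def Suc_diff_le of_nat_diff)
  next
    case 4
    then show ?thesis
      using Xdet_Suc_Suc[of d k' C] less.IH[of k'] less.IH[of "Suc k'"] by (simp add: algebra_simps)
  qed (simp_all add: Delta_def)
qed

lemma acoef_eq_Xdet:
  assumes "d \<le> i"
  shows "acoef d C i = Xdet d C (i - 1)"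
proof (cases "i = d")
  case True
  have "adjugate d C d d = detn (d - 1) (\<lambda>a b. C (skip d a) (skip d b))"
    unfolding adjugate_def by simp
  also have "\<dots> = detn (d - 1) (cartan_ext d C)"
    by (rule detn_cong) (auto simp: skip_def cartan_ext_def)
  finally show ?thesis using True unfolding acoef_def Xdet_def by simp
qed (use assms in \<open>simp add: acoef_def\<close>)

definition cartan_apply :: "nat \<Rightarrow> (nat \<Rightarrow> nat \<Rightarrow> int) \<Rightarrow> nat \<Rightarrow> (nat \<Rightarrow> int) \<Rightarrow> nat \<Rightarrow> int" where
  "cartan_apply d C n c i = (\<Sum>j\<in>{1..n}. cartan_ext d C i j * c j)"

lemma cartan_apply_Suc:
  "cartan_apply d C (Suc n) c i = cartan_apply d C n c i + cartan_ext d C i (Suc n) * c (Suc n)"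
  by (simp add: cartan_apply_def)

lemma cartan_apply_add:
  "cartan_apply d C n (\<lambda>j. f j + g j) i = cartan_apply d C n f i + cartan_apply d C n g i"
  by (simp add: cartan_apply_def distrib_left sum.distrib)

lemma cartan_apply_cong:
  "(\<And>j. j \<in> {1..n} \<Longrightarrow> cartan_ext d C i j * f j = cartan_ext d C i j * g j)
    \<Longrightarrow> cartan_apply d C n f i = cartan_apply d C n g i"
  unfolding cartan_apply_def by (rule sum.cong) auto

lemma cartan_apply_chain:
  assumes "1 \<le> d" "d < i" "i < n"
  shows "cartan_apply d C n c i = 2 * c i - c (i - 1) - c (i + 1)"
proof -
  obtain k where k: "i = Suc k" "d \<le> k" using assms by (cases i) auto
  have "cartan_apply d C n c i = (\<Sum>j\<in>{k, Suc k, Suc (Suc k)}. cartan_ext d C i j * c j)"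
    unfolding cartan_apply_def
    by (rule sum.mono_neutral_right) (use assms k in \<open>auto intro!: cartan_ext_eq_0\<close>)
  also have "\<dots> = 2 * c i - c (i - 1) - c (i + 1)"
    using k by (simp add: cartan_ext_def)
  finally show ?thesis .
qed

lemma cartan_apply_last:
  assumes "1 \<le> d" "d < n"
  shows "cartan_apply d C n c n = 2 * c n - c (n - 1)"
proof -
  obtain k where k: "n = Suc k" "d \<le> k" using assms by (cases n) auto
  have "cartan_apply d C n c n = (\<Sum>j\<in>{k, Suc k}. cartan_ext d C n j * c j)"
    unfolding cartan_apply_def
    by (rule sum.mono_neutral_right) (use assms k in \<open>auto intro!: cartan_ext_eq_0\<close>)
  also have "\<dots> = 2 * c n - c (n - 1)"
    using k by (simp add: cartan_ext_def)
  finally show ?thesis .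
qed

lemma adjugate_cartan_apply:
  assumes "k \<in> {1..n}"
  shows "(\<Sum>i\<in>{1..n}. adjugate n (cartan_ext d C) k i * cartan_apply d C n e i) = Xdet d C n * e k"
  using adjugate_mult_vec[OF assms] by (simp add: cartan_apply_def Xdet_def)

text \<open>The vector a is det(X_n) times the last row of C(X_n)^-1: for n = d it is the last row
  of the adjugate of C(X), and the recurrence for det(X_n) carries it along the chain.\<close>
lemma acoef_cartan_apply:
  assumes "1 \<le> d" "d \<le> n"
  shows "(\<Sum>i\<in>{1..n}. acoef d C i * cartan_apply d C n c i) = Xdet d C n * c n"
  using assms(2)
proof (induction n rule: dec_induct)
  case base
  have "(\<Sum>i\<in>{1..d}. acoef d C i * cartan_apply d C d c i)
      = (\<Sum>i\<in>{1..d}. adjugate d C d i * (\<Sum>j\<in>{1..d}. C i j * c j))"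
    by (rule sum.cong[OF refl]) (auto simp: acoef_def cartan_apply_def cartan_ext_def)
  also have "\<dots> = detn d C * c d"
    using adjugate_mult_vec assms(1) by simp
  also have "detn d C = Xdet d C d"
    unfolding Xdet_def by (rule detn_cong) (auto simp: cartan_ext_def)
  finally show ?case .
next
  case (step n)
  have last_col: "cartan_ext d C i (Suc n) = (if i = n then -1 else 0)" if "i \<in> {1..n}" for i
    using that step by (auto simp: cartan_ext_def)
  have "(\<Sum>i\<in>{1..Suc n}. acoef d C i * cartan_apply d C (Suc n) c i)
      = (\<Sum>i\<in>{1..n}. acoef d C i * cartan_apply d C n c i)
        + (\<Sum>i\<in>{1..n}. acoef d C i * (cartan_ext d C i (Suc n) * c (Suc n)))
        + acoef d C (Suc n) * cartan_apply d C (Suc n) c (Suc n)"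
    by (simp add: cartan_apply_Suc distrib_left sum.distrib)
  also have "(\<Sum>i\<in>{1..n}. acoef d C i * (cartan_ext d C i (Suc n) * c (Suc n)))
      = - acoef d C n * c (Suc n)"
    using step assms(1) by (simp add: last_col if_distrib[of "\<lambda>x. _ * (x * _)"] cong: if_cong)
  also have "cartan_apply d C (Suc n) c (Suc n) = 2 * c (Suc n) - c n"
    using cartan_apply_last[of d "Suc n" C c] step assms(1) by simp
  also note step.IH
  also have "acoef d C n = Xdet d C (n - 1)"
    using acoef_eq_Xdet step by auto
  also have "acoef d C (Suc n) = Xdet d C n"
    using acoef_eq_Xdet step by auto
  also have "Xdet d C n * c n + - Xdet d C (n - 1) * c (Suc n) + Xdet d C n * (2 * c (Suc n) - c n)
      = (2 * Xdet d C n - Xdet d C (n - 1)) * c (Suc n)"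
    by (simp add: algebra_simps)
  also have "2 * Xdet d C n - Xdet d C (n - 1) = Xdet d C (Suc n)"
    using Xdet_Suc_Suc[of d "n - 1" C] step assms(1) by (simp add: Suc_diff_le)
  finally show ?case .
qed

section \<open>Weights and the linear form\<close>

lemma seqlen_less_imp_zero:
  assumes "x \<in> H1" "seqlen x < i"
  shows "x i = 0"
proof (rule ccontr)
  assume "x i \<noteq> 0"
  moreover have "finite {i. x i \<noteq> 0}" using assms(1) unfolding H1_def by simp
  ultimately have "i \<le> seqlen x" unfolding seqlen_def by (auto intro: Max_ge)
  with assms(2) show False by simp
qed

lemma seqlen_le:
  assumes "\<And>i. m < i \<Longrightarrow> x i = 0"
  shows "seqlen x \<le> m"
proof -
  have sub: "{i. x i \<noteq> 0} \<subseteq> {..m}" using assms not_le by blast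
  then have "finite {i. x i \<noteq> 0}" by (rule finite_subset) simp
  with sub show ?thesis unfolding seqlen_def by (auto simp: Max_le_iff)
qed

lemma sum_eq_sum_prefix:
  fixes f :: "nat \<Rightarrow> 'a::comm_monoid_add"
  assumes "m \<le> n" "\<And>i. m < i \<Longrightarrow> i \<le> n \<Longrightarrow> f i = 0"
  shows "(\<Sum>i\<in>{1..n}. f i) = (\<Sum>i\<in>{1..m}. f i)"
  by (rule sum.mono_neutral_right) (use assms in auto)

lemma Xdet_abs_ge:
  assumes "1 \<le> d" "Delta d C \<noteq> 0" "d \<le> n"
  shows "int n - int d - \<bar>Xdet d C d\<bar> \<le> \<bar>Xdet d C n\<bar>"
proof -
  have "Xdet d C n = Xdet d C d + (int n - int d) * Delta d C"
    using Xdet_linear[of d n C] assms by simp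
  moreover have "1 \<le> \<bar>Delta d C\<bar>" using assms(2) by linarith
  then have "int n - int d \<le> \<bar>(int n - int d) * Delta d C\<bar>"
    using assms(3) by (simp add: abs_mult mult_le_cancel_left1)
  ultimately show ?thesis by linarith
qed

lemma acoef_wt_sum:
  assumes "1 \<le> d" "fst mu \<in> H1" "snd mu \<in> H1"
    and P: "d \<le> P" "seqlen (fst mu) \<le> P" and Q: "seqlen (snd mu) \<le> Q" and "P + Q < n"
  shows "(\<Sum>i\<in>{1..n}. acoef d C i * wt n mu i) = hnorm d C mu + Xdet d C n * (\<Sum>j\<in>{1..Q}. snd mu j)"
proof -
  let ?x = "fst mu" and ?y = "snd mu"
  have acoef_tail: "acoef d C (n + 1 - j) = Xdet d C n - int j * Delta d C" if "j \<in> {1..Q}" for j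
  proof -
    have "acoef d C (n + 1 - j) = Xdet d C (n - j)"
      using acoef_eq_Xdet[of d "n + 1 - j" C] that P assms(7) by auto
    also have "\<dots> = Xdet d C n - int j * Delta d C"
    proof -
      have "d \<le> n - j" "d \<le> n" using that P assms(7) by auto
      then show ?thesis
        using Xdet_linear[of d "n - j" C] Xdet_linear[of d n C] assms(1)
        by (simp add: of_nat_diff algebra_simps)
    qed
    finally show ?thesis .
  qed
  note x_zero = seqlen_less_imp_zero[OF assms(2)] and y_zero = seqlen_less_imp_zero[OF assms(3)]
  have "(\<Sum>i\<in>{1..n}. acoef d C i * wt n mu i)
      = (\<Sum>i\<in>{1..n}. acoef d C i * ?x i) + (\<Sum>i\<in>{1..n}. acoef d C i * ?y (n + 1 - i))"
    by (simp add: wt_def distrib_left sum.distrib)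
  also have "(\<Sum>i\<in>{1..n}. acoef d C i * ?x i) = (\<Sum>i\<in>{1..seqlen ?x}. acoef d C i * ?x i)"
    by (rule sum_eq_sum_prefix) (use assms x_zero in auto)
  also have "(\<Sum>i\<in>{1..n}. acoef d C i * ?y (n + 1 - i)) = (\<Sum>j\<in>{1..n}. acoef d C (n + 1 - j) * ?y j)"
    by (rule sum.reindex_bij_witness[of _ "\<lambda>j. n + 1 - j" "\<lambda>j. n + 1 - j"]) auto
  also have "\<dots> = (\<Sum>j\<in>{1..Q}. acoef d C (n + 1 - j) * ?y j)"
    by (rule sum_eq_sum_prefix) (use assms y_zero in auto)
  also have "\<dots> = (\<Sum>j\<in>{1..Q}. Xdet d C n * ?y j - Delta d C * (int j * ?y j))"
  proof (rule sum.cong[OF refl])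
    fix j assume "j \<in> {1..Q}"
    then show "acoef d C (n + 1 - j) * ?y j = Xdet d C n * ?y j - Delta d C * (int j * ?y j)"
      by (simp only: acoef_tail) (simp add: algebra_simps)
  qed
  also have "\<dots> = Xdet d C n * (\<Sum>j\<in>{1..Q}. ?y j) - Delta d C * (\<Sum>j\<in>{1..Q}. int j * ?y j)"
    by (simp add: sum_subtractf sum_distrib_left)
  also have "(\<Sum>j\<in>{1..Q}. int j * ?y j) = (\<Sum>j\<in>{1..seqlen ?y}. int j * ?y j)"
    by (rule sum_eq_sum_prefix) (use assms y_zero in auto)
  finally show ?thesis unfolding hnorm_def by (simp add: mult.commute)
qed

definition cartan_solves :: "nat \<Rightarrow> (nat \<Rightarrow> nat \<Rightarrow> int) \<Rightarrow> nat \<Rightarrow> (nat \<Rightarrow> int) \<Rightarrow> (nat \<Rightarrow> int) \<Rightarrow> bool" where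
  "cartan_solves d C n c w \<longleftrightarrow> (\<forall>i\<in>{1..n}. cartan_apply d C n c i = w i)"

lemma Qge_iff_cartan_solves:
  "Qge d C n b b' \<longleftrightarrow> (\<exists>c. (\<forall>j. 0 \<le> c j) \<and> cartan_solves d C n c (\<lambda>i. b i - b' i))"
proof
  assume "Qge d C n b b'"
  then obtain c :: "nat \<Rightarrow> nat" where "\<forall>i\<in>{1..n}. b i - b' i = cartan_apply d C n (\<lambda>j. int (c j)) i"
    unfolding Qge_def cartan_apply_def by blast
  then show "\<exists>c. (\<forall>j. 0 \<le> c j) \<and> cartan_solves d C n c (\<lambda>i. b i - b' i)"
    unfolding cartan_solves_def by (intro exI[of _ "\<lambda>j. int (c j)"]) auto
next
  assume "\<exists>c. (\<forall>j. 0 \<le> c j) \<and> cartan_solves d C n c (\<lambda>i. b i - b' i)"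
  then obtain c where c: "\<forall>j. 0 \<le> c j" "cartan_solves d C n c (\<lambda>i. b i - b' i)" by blast
  then have "\<And>j. int (nat (c j)) = c j" by simp
  with c(2) show "Qge d C n b b'"
    unfolding Qge_def cartan_solves_def cartan_apply_def by (intro exI[of _ "\<lambda>j. nat (c j)"]) simp
qed

lemma Xdet_mult_last:
  assumes "1 \<le> d"
    and "fst mu \<in> H1" "snd mu \<in> H1" "fst nu \<in> H1" "snd nu \<in> H1"
    and "d \<le> P" "seqlen (fst mu) \<le> P" "seqlen (fst nu) \<le> P"
    and "seqlen (snd mu) \<le> Q" "seqlen (snd nu) \<le> Q" "P + Q < n"
    and "cartan_solves d C n c (\<lambda>i. wt n mu i - wt n nu i)"
  shows "Xdet d C n * c n
    = hnorm d C mu - hnorm d C nu + Xdet d C n * (\<Sum>j\<in>{1..Q}. snd mu j - snd nu j)"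
proof -
  have "Xdet d C n * c n = (\<Sum>i\<in>{1..n}. acoef d C i * cartan_apply d C n c i)"
    using acoef_cartan_apply assms by simp
  also have "\<dots> = (\<Sum>i\<in>{1..n}. acoef d C i * wt n mu i) - (\<Sum>i\<in>{1..n}. acoef d C i * wt n nu i)"
    using assms(12) by (simp add: cartan_solves_def right_diff_distrib sum_subtractf)
  also have "\<dots> = hnorm d C mu - hnorm d C nu + Xdet d C n * (\<Sum>j\<in>{1..Q}. snd mu j - snd nu j)"
    using acoef_wt_sum[of d mu P Q n C] acoef_wt_sum[of d nu P Q n C] assms
    by (simp add: sum_subtractf algebra_simps)
  finally show ?thesis .
qed

section \<open>Solutions along the chain\<close>

definition tail_profile :: "nat \<Rightarrow> (nat \<Rightarrow> int) \<Rightarrow> nat \<Rightarrow> int" where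
  "tail_profile Q y k = (\<Sum>j\<in>{1..Q}. y j * int (min j k))"

lemma tail_profile_0 [simp]: "tail_profile Q y 0 = 0"
  by (simp add: tail_profile_def)

lemma tail_profile_saturated: "Q \<le> k \<Longrightarrow> tail_profile Q y k = (\<Sum>j\<in>{1..Q}. y j * int j)"
  unfolding tail_profile_def by (rule sum.cong) auto

lemma tail_profile_Suc_Suc:
  assumes "\<And>j. Q < j \<Longrightarrow> y j = 0"
  shows "tail_profile Q y (Suc (Suc k)) = 2 * tail_profile Q y (Suc k) - tail_profile Q y k - y (Suc k)"
proof -
  have min_Suc_Suc: "y j * int (min j (Suc (Suc k)))
      = 2 * (y j * int (min j (Suc k))) - y j * int (min j k) - (if j = Suc k then y j else 0)" for j
  proof -
    consider "j \<le> k" | "j = Suc k" | "Suc (Suc k) \<le> j" by linarith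
    then show ?thesis by cases (simp_all add: min_def algebra_simps)
  qed
  have "tail_profile Q y (Suc (Suc k)) = (\<Sum>j\<in>{1..Q}. 2 * (y j * int (min j (Suc k)))
      - y j * int (min j k) - (if j = Suc k then y j else 0))"
    unfolding tail_profile_def min_Suc_Suc ..
  also have "\<dots> = 2 * tail_profile Q y (Suc k) - tail_profile Q y k - y (Suc k)"
    using assms by (simp add: tail_profile_def sum_subtractf sum_distrib_left)
  finally show ?thesis .
qed

text \<open>Beyond the support of the weights the equations C(X_n) e = w are the second-order
  recurrence of the chain, so the last entry of e determines its tail.\<close>
lemma cartan_solves_tail:
  assumes "1 \<le> d" "d \<le> P" "P < n"
    and sol: "cartan_solves d C n e w"
    and w: "\<And>i. P < i \<Longrightarrow> i \<le> n \<Longrightarrow> w i = y (n + 1 - i)"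
    and y_zero: "\<And>j. Q < j \<Longrightarrow> y j = 0"
    and last: "e n = tail_profile Q y 1"
    and k: "1 \<le> k" "k \<le> n - P"
  shows "e (n + 1 - k) = tail_profile Q y k"
proof -
  have "e (n - k) = tail_profile Q y (Suc k) \<and> e (n - Suc k) = tail_profile Q y (Suc (Suc k))"
    if "Suc k \<le> n - P" for k
    using that
  proof (induction k)
    case 0
    have "2 * e n - e (n - 1) = y 1"
      using cartan_apply_last[of d n C e] sol w[of n] assms(1-3)
      by (simp add: cartan_solves_def)
    then show ?case using last tail_profile_Suc_Suc[of Q y 0, OF y_zero] by simp
  next
    case (Suc k)
    let ?i = "n - Suc k"
    have i: "d < ?i" "?i < n" "P < ?i" using Suc.prems assms(2) by auto
    have "?i + 1 = n - k" "?i - 1 = n - Suc (Suc k)" using i by auto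
    then have "2 * e ?i - e (n - Suc (Suc k)) - e (n - k) = y (Suc (Suc k))"
      using cartan_apply_chain[of d ?i n C e] sol w[of ?i] i assms(1) Suc.prems
      by (simp add: cartan_solves_def)
    then show ?case
      using Suc tail_profile_Suc_Suc[of Q y "Suc k", OF y_zero] by (simp add: algebra_simps)
  qed
  from this[of "k - 1"] k show ?thesis by (simp add: Suc_diff_le)
qed

lemma convex_diff_mono:
  fixes f :: "nat \<Rightarrow> int"
  assumes convex: "\<And>i. A < i \<Longrightarrow> i < B \<Longrightarrow> 2 * f i \<le> f (i - 1) + f (i + 1)"
    and "A \<le> j" "j \<le> l" "l + 1 \<le> B"
  shows "f (Suc j) - f j \<le> f (Suc l) - f l"
  using assms(3-)
proof (induction l rule: dec_induct)
  case (step l)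
  then show ?case using convex[of "Suc l"] assms(2) by simp
qed simp

text \<open>By convexity one step up (or down) forces t + 1 further steps up (or down), which
  leaves the range [0, t].\<close>
lemma bounded_convex_flat:
  fixes f :: "nat \<Rightarrow> int"
  assumes bounded: "\<And>i. A \<le> i \<Longrightarrow> i \<le> B \<Longrightarrow> 0 \<le> f i \<and> f i \<le> int t"
    and convex: "\<And>i. A < i \<Longrightarrow> i < B \<Longrightarrow> 2 * f i \<le> f (i - 1) + f (i + 1)"
    and i: "A + t \<le> i" "i + 1 + t \<le> B"
  shows "f (Suc i) = f i"
proof (rule ccontr)
  assume moves: "f (Suc i) \<noteq> f i"
  show False
  proof (cases "f (Suc i) > f i")
    case True
    have "f i + int m \<le> f (i + m)" if "m \<le> t + 1" for m
      using that
    proof (induction m)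
      case (Suc m)
      have "f (Suc i) - f i \<le> f (Suc (i + m)) - f (i + m)"
        by (rule convex_diff_mono[OF convex]) (use Suc.prems i in auto)
      with True Suc show ?case by simp
    qed simp
    from this[of "t + 1"] bounded[of i] bounded[of "i + (t + 1)"] i show False by simp
  next
    case False
    have "f (Suc i) + int m \<le> f (Suc i - m)" if "m \<le> t + 1" for m
      using that
    proof (induction m)
      case (Suc m)
      have "f (Suc (i - m)) - f (i - m) \<le> f (Suc i) - f i"
        by (rule convex_diff_mono[OF convex]) (use Suc.prems i in auto)
      moreover have "Suc (i - m) = Suc i - m" using Suc.prems i by auto
      ultimately show ?case using False moves Suc by simp
    qed simp
    from this[of "t + 1"] have "f (Suc i) + int (t + 1) \<le> f (i - t)" by simp
    moreover have "0 \<le> f (Suc i)" "f (i - t) \<le> int t" using bounded[of "Suc i"] bounded[of "i - t"] i by auto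
    ultimately show False by linarith
  qed
qed

section \<open>Doubling a node of the chain\<close>

definition dup_at :: "nat \<Rightarrow> (nat \<Rightarrow> 'a) \<Rightarrow> nat \<Rightarrow> 'a" where
  "dup_at m c j = (if j < m then c j else c (j - 1))"

definition ins_zero :: "nat \<Rightarrow> (nat \<Rightarrow> int) \<Rightarrow> nat \<Rightarrow> int" where
  "ins_zero m w i = (if i < m then w i else if i = m then 0 else w (i - 1))"

lemma dup_at_undup:
  assumes "0 < m" "c (m - 1) = c m"
  shows "dup_at m (\<lambda>j. if j < m then c j else c (Suc j)) = c"
proof
  fix j
  show "dup_at m (\<lambda>j. if j < m then c j else c (Suc j)) j = c j"
    using assms by (cases "j < m"; cases "j = m") (auto simp: dup_at_def)
qed

text \<open>A node inserted into the chain where c is locally constant sees 2c - c - c = 0.\<close>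
lemma cartan_apply_dup_at:
  assumes "1 \<le> d" "d < m" "m \<le> n" "c (m - 1) = c m" "1 \<le> i" "i \<le> Suc n"
  shows "cartan_apply d C (Suc n) (dup_at m c) i = ins_zero m (cartan_apply d C n c) i"
proof -
  consider "i < m" | "i = m" | "m < i" by linarith
  then show ?thesis
  proof cases
    case 1
    have "cartan_ext d C i (Suc n) = 0"
      by (rule cartan_ext_eq_0) (use 1 assms in auto)
    then have "cartan_apply d C (Suc n) (dup_at m c) i = cartan_apply d C n (dup_at m c) i"
      by (simp add: cartan_apply_Suc)
    also have "\<dots> = cartan_apply d C n c i"
    proof (rule cartan_apply_cong)
      fix j assume "j \<in> {1..n}"
      show "cartan_ext d C i j * dup_at m c j = cartan_ext d C i j * c j"
      proof (cases "m < j")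
        case True
        then have "cartan_ext d C i j = 0" by (intro cartan_ext_eq_0) (use 1 assms in auto)
        then show ?thesis by simp
      qed (use assms in \<open>auto simp: dup_at_def\<close>)
    qed
    finally show ?thesis using 1 by (simp add: ins_zero_def)
  next
    case 2
    have "cartan_apply d C (Suc n) (dup_at m c) m = 2 * dup_at m c m - dup_at m c (m - 1) - dup_at m c (m + 1)"
      by (rule cartan_apply_chain) (use assms in auto)
    also have "\<dots> = 0" using assms by (auto simp: dup_at_def)
    finally show ?thesis using 2 by (simp add: ins_zero_def)
  next
    case 3
    then obtain a where a: "i = Suc a" "d < a" "m \<le> a" using assms(2) by (cases i) auto
    have "cartan_apply d C (Suc n) (dup_at m c) i = (\<Sum>j\<in>{0..n}. cartan_ext d C i (Suc j) * dup_at m c (Suc j))"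
      unfolding cartan_apply_def by (rule sum.reindex_bij_witness[of _ Suc "\<lambda>j. j - 1"]) auto
    also have "\<dots> = (\<Sum>j\<in>{0..n}. cartan_ext d C a j * c j)"
    proof (rule sum.cong[OF refl])
      fix j
      have shift: "cartan_ext d C i (Suc j) = cartan_ext d C a j" using a cartan_ext_Suc_Suc by simp
      show "cartan_ext d C i (Suc j) * dup_at m c (Suc j) = cartan_ext d C a j * c j"
      proof (cases "Suc j < m")
        case True
        then have "cartan_ext d C a j = 0" by (intro cartan_ext_eq_0) (use a in auto)
        then show ?thesis using shift by simp
      qed (use shift in \<open>auto simp: dup_at_def\<close>)
    qed
    also have "\<dots> = (\<Sum>j\<in>{1..n}. cartan_ext d C a j * c j)"
    proof -
      have "{0..n} = insert 0 {1..n}" by auto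
      moreover have "cartan_ext d C a 0 = 0" by (rule cartan_ext_eq_0) (use a assms(1) in auto)
      ultimately show ?thesis by simp
    qed
    finally show ?thesis using 3 a by (simp add: ins_zero_def cartan_apply_def)
  qed
qed

lemma cartan_solves_cong:
  "(\<And>i. i \<in> {1..n} \<Longrightarrow> w i = w' i) \<Longrightarrow> cartan_solves d C n c w \<longleftrightarrow> cartan_solves d C n c w'"
  by (simp add: cartan_solves_def)

lemma cartan_solves_dup_at_iff:
  assumes "1 \<le> d" "d < m" "m \<le> n" "c (m - 1) = c m"
  shows "cartan_solves d C (Suc n) (dup_at m c) (ins_zero m w) \<longleftrightarrow> cartan_solves d C n c w"
proof -
  have "cartan_solves d C (Suc n) (dup_at m c) (ins_zero m w)
      \<longleftrightarrow> (\<forall>i\<in>{1..Suc n}. ins_zero m (cartan_apply d C n c) i = ins_zero m w i)"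
    using cartan_apply_dup_at[OF assms] by (auto simp: cartan_solves_def)
  also have "\<dots> \<longleftrightarrow> cartan_solves d C n c w"
  proof
    assume ins: "\<forall>i\<in>{1..Suc n}. ins_zero m (cartan_apply d C n c) i = ins_zero m w i"
    show "cartan_solves d C n c w"
      unfolding cartan_solves_def
    proof
      fix i assume i: "i \<in> {1..n}"
      show "cartan_apply d C n c i = w i"
      proof (cases "i < m")
        case True
        then show ?thesis using ins i by (force simp: ins_zero_def)
      next
        case False
        then show ?thesis using ins[rule_format, of "Suc i"] i by (simp add: ins_zero_def)
      qed
    qed
  next
    assume "cartan_solves d C n c w"
    moreover have "i - 1 \<in> {1..n}" if "i \<in> {1..Suc n}" "m < i" for i
      using that assms(2) by auto
    ultimately show "\<forall>i\<in>{1..Suc n}. ins_zero m (cartan_apply d C n c) i = ins_zero m w i"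
      using assms(3) by (auto simp: cartan_solves_def ins_zero_def)
  qed
  finally show ?thesis .
qed

lemma wt_Suc_eq_ins_zero:
  assumes "\<And>j. m \<le> j \<Longrightarrow> fst mu j = 0" "\<And>j. n + 2 - m \<le> j \<Longrightarrow> snd mu j = 0"
    and "1 \<le> m" "m \<le> n" "1 \<le> i" "i \<le> Suc n"
  shows "wt (Suc n) mu i = ins_zero m (wt n mu) i"
proof -
  consider "i < m" | "i = m" | "m < i" by linarith
  then show ?thesis
  proof cases
    case 3
    then have "Suc n + 1 - i = n + 1 - (i - 1)" using assms by auto
    then show ?thesis using 3 assms by (auto simp: wt_def ins_zero_def)
  qed (use assms in \<open>auto simp: wt_def ins_zero_def\<close>)
qed

lemma cartan_solves_wt_Suc_iff:
  assumes "1 \<le> d" "d < m" "m \<le> n" "c (m - 1) = c m"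
    and "\<And>j. m \<le> j \<Longrightarrow> fst mu j = 0" "\<And>j. n + 2 - m \<le> j \<Longrightarrow> snd mu j = 0"
    and "\<And>j. m \<le> j \<Longrightarrow> fst nu j = 0" "\<And>j. n + 2 - m \<le> j \<Longrightarrow> snd nu j = 0"
  shows "cartan_solves d C (Suc n) (dup_at m c) (\<lambda>i. wt (Suc n) mu i - wt (Suc n) nu i)
    \<longleftrightarrow> cartan_solves d C n c (\<lambda>i. wt n mu i - wt n nu i)"
proof -
  have "wt (Suc n) mu i - wt (Suc n) nu i = ins_zero m (\<lambda>i. wt n mu i - wt n nu i) i"
    if "i \<in> {1..Suc n}" for i
    using wt_Suc_eq_ins_zero[of m mu n i] wt_Suc_eq_ins_zero[of m nu n i] assms that
    by (simp add: ins_zero_def)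
  then have "cartan_solves d C (Suc n) (dup_at m c) (\<lambda>i. wt (Suc n) mu i - wt (Suc n) nu i)
      \<longleftrightarrow> cartan_solves d C (Suc n) (dup_at m c) (ins_zero m (\<lambda>i. wt n mu i - wt n nu i))"
    by (rule cartan_solves_cong)
  also have "\<dots> \<longleftrightarrow> cartan_solves d C n c (\<lambda>i. wt n mu i - wt n nu i)"
    by (rule cartan_solves_dup_at_iff[OF assms(1-4)])
  finally show ?thesis .
qed

section \<open>Stabilization of the intervals\<close>

lemma wt_nonneg: "lam \<in> H2p \<Longrightarrow> 0 \<le> wt n lam i"
  by (auto simp: wt_def H2p_def H1p_def intro!: add_nonneg_nonneg)

lemma dominant_wt: "lam \<in> H2p \<Longrightarrow> dominant n (wt n lam)"
  by (simp add: dominant_def wt_nonneg) (simp add: wt_def)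

lemma wt_eq_0_iff:
  assumes "lam \<in> H2p" "i \<in> {1..n}"
  shows "wt n lam i = 0 \<longleftrightarrow> fst lam i = 0 \<and> snd lam (n + 1 - i) = 0"
proof -
  have "0 \<le> fst lam i" "0 \<le> snd lam (n + 1 - i)" using assms(1) by (auto simp: H2p_def H1p_def)
  then show ?thesis using assms(2) by (auto simp: wt_def)
qed

text \<open>The witnesses c, c' >= 0 of the two inequalities add up to the unique solution of
  C(X_n) e = lam1^(n) - lam2^(n), which bounds c.\<close>
lemma finite_Ivaln:
  assumes "Xdet d C n \<noteq> 0"
  shows "finite (Ivaln d C n lam1 lam2)"
proof -
  define R where "R k = (\<Sum>i\<in>{1..n}. adjugate n (cartan_ext d C) k i * (wt n lam1 i - wt n lam2 i))" for k
  define B where "B = (\<Sum>k\<in>{1..n}. \<bar>R k\<bar>)"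
  define F where "F = {f. \<forall>k. (k \<in> {1..n} \<longrightarrow> f k \<in> {0..B}) \<and> (k \<notin> {1..n} \<longrightarrow> f k = 0)}"
  define beta_of where "beta_of f i = (if i \<in> {1..n} then wt n lam1 i - cartan_apply d C n f i else 0)" for f i
  have "Ivaln d C n lam1 lam2 \<subseteq> beta_of ` F"
  proof
    fix \<beta> assume "\<beta> \<in> Ivaln d C n lam1 lam2"
    then have dom: "dominant n \<beta>" and "Qge d C n (wt n lam1) \<beta>" "Qge d C n \<beta> (wt n lam2)"
      by (auto simp: Ivaln_def)
    then obtain c c' where c: "\<forall>j. 0 \<le> c j" "cartan_solves d C n c (\<lambda>i. wt n lam1 i - \<beta> i)"
      and c': "\<forall>j. 0 \<le> c' j" "cartan_solves d C n c' (\<lambda>i. \<beta> i - wt n lam2 i)"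
      unfolding Qge_iff_cartan_solves by blast
    have c_le: "c k \<le> B" if k: "k \<in> {1..n}" for k
    proof -
      let ?e = "\<lambda>j. c j + c' j"
      have "Xdet d C n * ?e k = R k"
        using adjugate_cartan_apply[OF k, of d C ?e] c(2) c'(2)
        by (simp add: R_def cartan_apply_add cartan_solves_def)
      then have "\<bar>R k\<bar> = \<bar>Xdet d C n\<bar> * \<bar>?e k\<bar>" by (metis abs_mult)
      moreover have "1 \<le> \<bar>Xdet d C n\<bar>" using assms by linarith
      ultimately have "\<bar>?e k\<bar> \<le> \<bar>R k\<bar>" by (simp add: mult_le_cancel_right1)
      moreover have "c k \<le> \<bar>?e k\<bar>" using c(1) c'(1) by (simp add: add_increasing2)
      moreover have "\<bar>R k\<bar> \<le> B" unfolding B_def by (rule member_le_sum) (use k in auto)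
      ultimately show ?thesis by linarith
    qed
    define f where "f k = (if k \<in> {1..n} then c k else 0)" for k
    have "f \<in> F" using c_le c(1) by (auto simp: F_def f_def)
    moreover have "cartan_apply d C n f i = cartan_apply d C n c i" for i
      by (rule cartan_apply_cong) (simp add: f_def)
    then have "\<beta> i = beta_of f i" for i
      using c(2) dom by (cases "i \<in> {1..n}") (auto simp: beta_of_def cartan_solves_def dominant_def)
    then have "\<beta> = beta_of f" ..
    ultimately show "\<beta> \<in> beta_of ` F" by blast
  qed
  moreover have "finite F" unfolding F_def by (rule finite_set_of_finite_funs) auto
  ultimately show ?thesis using finite_subset by blast
qed

locale interval_data =
  fixes d :: nat and C :: "nat \<Rightarrow> nat \<Rightarrow> int" and lam1 lam2 :: "(nat \<Rightarrow> int) \<times> (nat \<Rightarrow> int)"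
  assumes d_pos: "1 \<le> d" and Delta_nonzero: "Delta d C \<noteq> 0"
    and lam1: "lam1 \<in> H2p" and lam2: "lam2 \<in> H2p"
    and hnorm_eq: "hnorm d C lam1 = hnorm d C lam2"
begin

definition "xbound = max d (max (seqlen (fst lam1)) (seqlen (fst lam2)))"
definition "ybound = max (seqlen (snd lam1)) (seqlen (snd lam2))"
definition "ydiff j = snd lam1 j - snd lam2 j"

text \<open>middle is the common value of c + c' in the middle of the chain, for any witnesses
  C(X_n) c = lam1^(n) - beta and C(X_n) c' = beta - lam2^(n); the cuts leave room for c,
  which is convex there with values in [0, middle], to become flat.\<close>
definition "middle = (\<Sum>j\<in>{1..ybound}. ydiff j * int j)"
definition "xcut = xbound + nat middle + 2"
definition "ycut = ybound + nat middle + 1"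
definition "stable_from = max (d + nat \<bar>Xdet d C d\<bar> + 1) (xcut + ycut)"

definition within_cuts :: "(nat \<Rightarrow> int) \<times> (nat \<Rightarrow> int) \<Rightarrow> bool" where
  "within_cuts lam \<longleftrightarrow> lam \<in> H2p \<and> (\<forall>j\<ge>xcut. fst lam j = 0) \<and> (\<forall>j>ycut. snd lam j = 0)"

definition between :: "nat \<Rightarrow> (nat \<Rightarrow> int) \<times> (nat \<Rightarrow> int) \<Rightarrow> bool" where
  "between n lam \<longleftrightarrow> Qge d C n (wt n lam1) (wt n lam) \<and> Qge d C n (wt n lam) (wt n lam2)"

lemma H1_components: "fst lam1 \<in> H1" "snd lam1 \<in> H1" "fst lam2 \<in> H1" "snd lam2 \<in> H1"
  using lam1 lam2 by (auto simp: H2p_def H1p_def)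

lemma fst_lams_zero: "xbound < i \<Longrightarrow> fst lam1 i = 0 \<and> fst lam2 i = 0"
  using seqlen_less_imp_zero[OF H1_components(1)] seqlen_less_imp_zero[OF H1_components(3)]
  by (auto simp: xbound_def)

lemma snd_lams_zero: "ybound < i \<Longrightarrow> snd lam1 i = 0 \<and> snd lam2 i = 0"
  using seqlen_less_imp_zero[OF H1_components(2)] seqlen_less_imp_zero[OF H1_components(4)]
  by (auto simp: ybound_def)

lemma d_less_xcut: "d < xcut"
  by (simp add: xcut_def xbound_def)

lemma within_cuts_lam1: "within_cuts lam1" and within_cuts_lam2: "within_cuts lam2"
  using lam1 lam2 fst_lams_zero snd_lams_zero by (auto simp: within_cuts_def xcut_def ycut_def)

lemma cuts_le: "stable_from \<le> n \<Longrightarrow> xcut + ycut \<le> n"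
  by (simp add: stable_from_def)

lemma Xdet_nonzero: "stable_from \<le> n \<Longrightarrow> Xdet d C n \<noteq> 0"
  using Xdet_abs_ge[OF d_pos Delta_nonzero, of n] by (auto simp: stable_from_def)

context
  fixes n :: nat and \<beta> c c' :: "nat \<Rightarrow> int"
  assumes n: "stable_from \<le> n"
    and \<beta>: "\<And>i. i \<in> {1..n} \<Longrightarrow> 0 \<le> \<beta> i"
    and c: "\<forall>j. 0 \<le> c j" "cartan_solves d C n c (\<lambda>i. wt n lam1 i - \<beta> i)"
    and c': "\<forall>j. 0 \<le> c' j" "cartan_solves d C n c' (\<lambda>i. \<beta> i - wt n lam2 i)"
begin

lemma witness_sum_middle:
  assumes "xbound < i" "i \<le> n - ybound"
  shows "c i + c' i = middle"
proof -
  let ?e = "\<lambda>j. c j + c' j"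
  have bounds: "xbound + ybound < n" "d \<le> xbound"
    using n by (auto simp: stable_from_def xcut_def ycut_def xbound_def)
  have sol: "cartan_solves d C n ?e (\<lambda>i. wt n lam1 i - wt n lam2 i)"
    using c(2) c'(2) by (simp add: cartan_solves_def cartan_apply_add)
  have "Xdet d C n * ?e n = Xdet d C n * (\<Sum>j\<in>{1..ybound}. ydiff j)"
    using Xdet_mult_last[OF d_pos H1_components _ _ _ _ _ _ sol, of xbound ybound] bounds hnorm_eq
    by (simp add: xbound_def ybound_def ydiff_def)
  then have last: "?e n = tail_profile ybound ydiff 1"
    using Xdet_nonzero[OF n] by (simp add: tail_profile_def)
  have "?e (n + 1 - k) = tail_profile ybound ydiff k" if "1 \<le> k" "k \<le> n - xbound" for k
  proof (rule cartan_solves_tail[OF d_pos bounds(2) _ sol _ _ last that])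
    show "xbound < n" using bounds by simp
    show "wt n lam1 i - wt n lam2 i = ydiff (n + 1 - i)" if "xbound < i" "i \<le> n" for i
      using that fst_lams_zero[of i] by (simp add: wt_def ydiff_def)
    show "ydiff j = 0" if "ybound < j" for j
      using that snd_lams_zero[of j] by (simp add: ydiff_def)
  qed
  from this[of "n + 1 - i"] assms bounds show ?thesis
    by (simp add: tail_profile_saturated middle_def)
qed

lemma witnesses_flat:
  assumes "xcut - 1 \<le> i" "i \<le> n - ycut"
  shows "c (Suc i) = c i \<and> c' (Suc i) = c' i"
proof -
  have mid: "c j + c' j = middle" if "xbound < j" "j \<le> n - ybound" for j
    using witness_sum_middle that .
  have "c (xbound + 1) + c' (xbound + 1) = middle"
    using cuts_le[OF n] by (intro mid) (auto simp: xcut_def ycut_def)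
  then have "0 \<le> middle" using c(1) c'(1) by (metis add_nonneg_nonneg)
  have "c (Suc i) = c i"
  proof (rule bounded_convex_flat[of "xbound + 1" "n - ybound" c "nat middle"])
    show "0 \<le> c j \<and> c j \<le> int (nat middle)" if "xbound + 1 \<le> j" "j \<le> n - ybound" for j
    proof -
      have "c j + c' j = middle" using that by (intro mid) auto
      moreover have "0 \<le> c j" "0 \<le> c' j" using c(1) c'(1) by auto
      ultimately show ?thesis using \<open>0 \<le> middle\<close> by simp
    qed
    show "2 * c j \<le> c (j - 1) + c (j + 1)" if "xbound + 1 < j" "j < n - ybound" for j
    proof -
      have "cartan_apply d C n c j = 2 * c j - c (j - 1) - c (j + 1)"
        by (rule cartan_apply_chain) (use that d_pos in \<open>auto simp: xbound_def\<close>)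
      moreover have "cartan_apply d C n c j = wt n lam1 j - \<beta> j"
        using c(2) that by (simp add: cartan_solves_def)
      moreover have "wt n lam1 j = 0"
        using that fst_lams_zero[of j] snd_lams_zero[of "n + 1 - j"] by (auto simp: wt_def)
      moreover have "0 \<le> \<beta> j" using \<beta> that by simp
      ultimately show ?thesis by simp
    qed
  qed (use assms in \<open>auto simp: xcut_def ycut_def\<close>)
  moreover have "c (Suc i) + c' (Suc i) = c i + c' i"
    using mid[of i] mid[of "Suc i"] assms by (simp add: xcut_def ycut_def)
  ultimately show ?thesis by simp
qed

lemma weight_vanishes_between_cuts:
  assumes "xcut \<le> i" "i \<le> n - ycut"
  shows "\<beta> i = 0"
proof -
  have "cartan_apply d C n c i = 2 * c i - c (i - 1) - c (i + 1)"
    by (rule cartan_apply_chain) (use assms d_less_xcut d_pos in \<open>auto simp: ycut_def\<close>)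
  moreover have "cartan_apply d C n c i = wt n lam1 i - \<beta> i"
    using c(2) assms d_less_xcut by (simp add: cartan_solves_def ycut_def)
  moreover have "wt n lam1 i = 0"
    using assms fst_lams_zero[of i] snd_lams_zero[of "n + 1 - i"] by (auto simp: wt_def xcut_def ycut_def)
  moreover have "c (Suc (i - 1)) = c (i - 1)" "c (Suc i) = c i"
    using witnesses_flat[of "i - 1"] witnesses_flat[of i] assms by auto
  moreover have "Suc (i - 1) = i" using assms d_less_xcut by simp
  ultimately show ?thesis by simp
qed

end

lemma cartan_solves_Suc_iff:
  assumes "xcut + ycut \<le> n" "within_cuts mu" "within_cuts nu" "g (xcut - 1) = g xcut"
  shows "cartan_solves d C (Suc n) (dup_at xcut g) (\<lambda>i. wt (Suc n) mu i - wt (Suc n) nu i)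
    \<longleftrightarrow> cartan_solves d C n g (\<lambda>i. wt n mu i - wt n nu i)"
  by (rule cartan_solves_wt_Suc_iff[OF d_pos d_less_xcut])
    (use assms in \<open>auto simp: within_cuts_def ycut_def\<close>)

lemma between_Suc_imp_between:
  assumes n: "stable_from \<le> n" and \<gamma>: "within_cuts \<gamma>" and "between (Suc n) \<gamma>"
  shows "between n \<gamma>"
proof -
  have cuts: "xcut + ycut \<le> n" "0 < xcut" using cuts_le[OF n] d_less_xcut by auto
  obtain c c' where c: "\<forall>j. 0 \<le> c j" "cartan_solves d C (Suc n) c (\<lambda>i. wt (Suc n) lam1 i - wt (Suc n) \<gamma> i)"
    and c': "\<forall>j. 0 \<le> c' j" "cartan_solves d C (Suc n) c' (\<lambda>i. wt (Suc n) \<gamma> i - wt (Suc n) lam2 i)"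
    using assms(3) unfolding between_def Qge_iff_cartan_solves by blast
  have flat_at: "c (Suc i) = c i \<and> c' (Suc i) = c' i" if "xcut - 1 \<le> i" "i \<le> Suc n - ycut" for i
    using witnesses_flat[of "Suc n" "wt (Suc n) \<gamma>" c c' i] n wt_nonneg[of \<gamma>] \<gamma> c c' that
    by (auto simp: within_cuts_def)
  have "c (Suc (xcut - 1)) = c (xcut - 1)" "c' (Suc (xcut - 1)) = c' (xcut - 1)"
    "c (Suc xcut) = c xcut" "c' (Suc xcut) = c' xcut"
    using flat_at[of "xcut - 1"] flat_at[of xcut] cuts by auto
  then have flat: "c (xcut - 1) = c xcut" "c xcut = c (Suc xcut)"
    "c' (xcut - 1) = c' xcut" "c' xcut = c' (Suc xcut)"
    using cuts by simp_all
  define g where "g = (\<lambda>j. if j < xcut then c j else c (Suc j))"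
  define g' where "g' = (\<lambda>j. if j < xcut then c' j else c' (Suc j))"
  have "c = dup_at xcut g" "c' = dup_at xcut g'"
    unfolding g_def g'_def
    by (simp_all only: dup_at_undup[OF cuts(2) flat(1)] dup_at_undup[OF cuts(2) flat(3)])
  moreover have "g (xcut - 1) = g xcut" "g' (xcut - 1) = g' xcut"
    using flat cuts by (simp_all add: g_def g'_def)
  moreover have "\<forall>j. 0 \<le> g j" "\<forall>j. 0 \<le> g' j" using c(1) c'(1) by (simp_all add: g_def g'_def)
  ultimately show "between n \<gamma>"
    using c(2) c'(2) cartan_solves_Suc_iff[OF cuts(1) within_cuts_lam1 \<gamma>]
      cartan_solves_Suc_iff[OF cuts(1) \<gamma> within_cuts_lam2]
    unfolding between_def Qge_iff_cartan_solves by blast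
qed

lemma between_imp_between_Suc:
  assumes n: "stable_from \<le> n" and \<gamma>: "within_cuts \<gamma>" and "between n \<gamma>"
  shows "between (Suc n) \<gamma>"
proof -
  have cuts: "xcut + ycut \<le> n" "0 < xcut" using cuts_le[OF n] d_less_xcut by auto
  obtain c c' where c: "\<forall>j. 0 \<le> c j" "cartan_solves d C n c (\<lambda>i. wt n lam1 i - wt n \<gamma> i)"
    and c': "\<forall>j. 0 \<le> c' j" "cartan_solves d C n c' (\<lambda>i. wt n \<gamma> i - wt n lam2 i)"
    using assms(3) unfolding between_def Qge_iff_cartan_solves by blast
  have "c (Suc (xcut - 1)) = c (xcut - 1) \<and> c' (Suc (xcut - 1)) = c' (xcut - 1)"
    using witnesses_flat[of n "wt n \<gamma>" c c' "xcut - 1"] n wt_nonneg[of \<gamma>] \<gamma> c c' cuts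
    by (auto simp: within_cuts_def)
  then have "c (xcut - 1) = c xcut" "c' (xcut - 1) = c' xcut" using cuts by simp_all
  moreover have "\<forall>j. 0 \<le> dup_at xcut c j" "\<forall>j. 0 \<le> dup_at xcut c' j"
    using c(1) c'(1) by (simp_all add: dup_at_def)
  ultimately show "between (Suc n) \<gamma>"
    using c(2) c'(2) cartan_solves_Suc_iff[OF cuts(1) within_cuts_lam1 \<gamma>]
      cartan_solves_Suc_iff[OF cuts(1) \<gamma> within_cuts_lam2]
    unfolding between_def Qge_iff_cartan_solves by blast
qed

lemma between_iff_stable_from:
  assumes "stable_from \<le> n" "within_cuts \<gamma>"
  shows "between n \<gamma> \<longleftrightarrow> between stable_from \<gamma>"
  using assms(1)
proof (induction n rule: dec_induct)
  case (step n)
  then show ?case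
    using between_Suc_imp_between[OF step.hyps(1) assms(2)]
      between_imp_between_Suc[OF step.hyps(1) assms(2)] by blast
qed simp

text \<open>det(X_n) divides |lam1| - |gamma| for all large n, while |det(X_n)| grows linearly.\<close>
lemma hnorm_eq_if_between:
  assumes "within_cuts \<gamma>" "between stable_from \<gamma>"
  shows "hnorm d C \<gamma> = hnorm d C lam1"
proof (rule ccontr)
  define H where "H = hnorm d C lam1 - hnorm d C \<gamma>"
  assume "hnorm d C \<gamma> \<noteq> hnorm d C lam1"
  then have "H \<noteq> 0" by (simp add: H_def)
  define n where "n = stable_from + nat \<bar>H\<bar>"
  have n: "stable_from \<le> n" by (simp add: n_def)
  have "between n \<gamma>" using assms between_iff_stable_from[OF n assms(1)] by simp
  then obtain c where c: "cartan_solves d C n c (\<lambda>i. wt n lam1 i - wt n \<gamma> i)"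
    unfolding between_def Qge_iff_cartan_solves by blast
  have \<gamma>: "fst \<gamma> \<in> H1" "snd \<gamma> \<in> H1" "\<And>j. xcut \<le> j \<Longrightarrow> fst \<gamma> j = 0" "\<And>j. ycut < j \<Longrightarrow> snd \<gamma> j = 0"
    using assms(1) by (auto simp: within_cuts_def H2p_def H1p_def)
  have "seqlen (fst \<gamma>) \<le> xcut - 1" "seqlen (snd \<gamma>) \<le> ycut"
    using \<gamma>(3,4) by (simp_all add: seqlen_le)
  moreover have "d \<le> xcut - 1" "seqlen (fst lam1) \<le> xcut - 1" "seqlen (snd lam1) \<le> ycut"
    by (simp_all add: xcut_def ycut_def xbound_def ybound_def)
  moreover have "xcut - 1 + ycut < n" using cuts_le[OF n] d_less_xcut by simp
  ultimately have bounds: "d \<le> xcut - 1" "seqlen (fst lam1) \<le> xcut - 1" "seqlen (fst \<gamma>) \<le> xcut - 1"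
    "seqlen (snd lam1) \<le> ycut" "seqlen (snd \<gamma>) \<le> ycut" "xcut - 1 + ycut < n"
    by simp_all
  obtain S where "Xdet d C n * c n = H + Xdet d C n * S"
    using Xdet_mult_last[OF d_pos H1_components(1,2) \<gamma>(1,2) bounds c] unfolding H_def by blast
  then have "H = Xdet d C n * (c n - S)" by (simp add: right_diff_distrib)
  then have "Xdet d C n dvd H" ..
  then have "\<bar>Xdet d C n\<bar> \<le> \<bar>H\<bar>" using \<open>H \<noteq> 0\<close> by (rule dvd_imp_le_int[rotated])
  moreover have "int n - int d - \<bar>Xdet d C d\<bar> \<le> \<bar>Xdet d C n\<bar>"
    using Xdet_abs_ge[OF d_pos Delta_nonzero, of n] n d_less_xcut by (simp add: stable_from_def)
  moreover have "d + nat \<bar>Xdet d C d\<bar> + 1 \<le> stable_from" by (simp add: stable_from_def)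
  then have "int d + \<bar>Xdet d C d\<bar> + 1 + \<bar>H\<bar> \<le> int n" by (simp add: n_def)
  ultimately show False by linarith
qed

definition cut_of :: "nat \<Rightarrow> (nat \<Rightarrow> int) \<Rightarrow> (nat \<Rightarrow> int) \<times> (nat \<Rightarrow> int)" where
  "cut_of n \<beta> = (\<lambda>i. if 1 \<le> i \<and> i < xcut then \<beta> i else 0, \<lambda>j. if 1 \<le> j \<and> j \<le> ycut then \<beta> (n + 1 - j) else 0)"

lemma cut_of_wt:
  assumes "within_cuts \<gamma>" "xcut + ycut \<le> n"
  shows "cut_of n (wt n \<gamma>) = \<gamma>"
proof -
  have \<gamma>: "fst \<gamma> 0 = 0" "snd \<gamma> 0 = 0" "\<And>j. xcut \<le> j \<Longrightarrow> fst \<gamma> j = 0" "\<And>j. ycut < j \<Longrightarrow> snd \<gamma> j = 0"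
    using assms(1) by (auto simp: within_cuts_def H2p_def H1p_def H1_def)
  have "fst (cut_of n (wt n \<gamma>)) i = fst \<gamma> i" for i
    using \<gamma>(1) \<gamma>(3)[of i] \<gamma>(4)[of "n + 1 - i"] assms(2)
    by (cases "i = 0") (auto simp: cut_of_def wt_def)
  moreover have "snd (cut_of n (wt n \<gamma>)) j = snd \<gamma> j" for j
    using \<gamma>(2) \<gamma>(4)[of j] \<gamma>(3)[of "n + 1 - j"] assms(2)
    by (cases "j = 0") (auto simp: cut_of_def wt_def)
  ultimately show ?thesis by (simp add: prod_eq_iff fun_eq_iff)
qed

lemma within_cuts_cut_of:
  assumes "\<And>i. i \<in> {1..n} \<Longrightarrow> 0 \<le> \<beta> i" "xcut + ycut \<le> n"
  shows "within_cuts (cut_of n \<beta>)"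
proof -
  have "finite {i. fst (cut_of n \<beta>) i \<noteq> 0}"
    by (rule finite_subset[of _ "{..xcut}"]) (auto simp: cut_of_def)
  moreover have "finite {j. snd (cut_of n \<beta>) j \<noteq> 0}"
    by (rule finite_subset[of _ "{..ycut}"]) (auto simp: cut_of_def)
  moreover have "0 \<le> \<beta> (n + 1 - j)" if "1 \<le> j" "j \<le> ycut" for j
  proof -
    have "n + 1 - j \<in> {1..n}" using assms(2) that by auto
    then show ?thesis using assms(1) by blast
  qed
  ultimately show ?thesis using assms by (auto simp: within_cuts_def H2p_def H1p_def H1_def cut_of_def)
qed

lemma wt_cut_of:
  assumes "dominant n \<beta>" "\<And>i. xcut \<le> i \<Longrightarrow> i \<le> n - ycut \<Longrightarrow> \<beta> i = 0" "xcut + ycut \<le> n"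
  shows "wt n (cut_of n \<beta>) = \<beta>"
proof
  fix i
  show "wt n (cut_of n \<beta>) i = \<beta> i"
  proof (cases "i \<in> {1..n}")
    case True
    then consider "i < xcut" | "xcut \<le> i" "i \<le> n - ycut" | "n - ycut < i" by linarith
    then show ?thesis
    proof cases
      case 3
      then have "n + 1 - (n + 1 - i) = i" using True by simp
      then show ?thesis using True 3 assms(3) by (auto simp: wt_def cut_of_def)
    qed (use True assms in \<open>auto simp: wt_def cut_of_def\<close>)
  qed (use assms(1) in \<open>auto simp: wt_def dominant_def\<close>)
qed

lemma Ival_eventually_between:
  assumes "\<gamma> \<in> Ival d C lam1 lam2"
  obtains N where "\<forall>n\<ge>N. between n \<gamma>"
proof -
  from assms obtain N1 N2 where "\<forall>n\<ge>N1. Qge d C n (wt n lam1) (wt n \<gamma>)" "\<forall>n\<ge>N2. Qge d C n (wt n \<gamma>) (wt n lam2)"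
    unfolding Ival_def Hge_def by blast
  then have "\<forall>n\<ge>max N1 N2. between n \<gamma>" by (simp add: between_def)
  then show thesis by (rule that)
qed

lemma Ival_within_cuts:
  assumes "\<gamma> \<in> Ival d C lam1 lam2"
  shows "within_cuts \<gamma>"
proof -
  have \<gamma>: "\<gamma> \<in> H2p" "fst \<gamma> \<in> H1" "snd \<gamma> \<in> H1" using assms by (auto simp: Ival_def H2p_def H1p_def)
  obtain N where "\<forall>n\<ge>N. between n \<gamma>"
    using Ival_eventually_between[OF assms(1)] .
  define n where "n = max N stable_from + seqlen (fst \<gamma>) + seqlen (snd \<gamma>)"
  have n: "stable_from \<le> n" "N \<le> n" by (auto simp: n_def)
  have large: "xcut + ycut + seqlen (fst \<gamma>) + seqlen (snd \<gamma>) \<le> n"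
    using cuts_le[of "max N stable_from"] by (simp add: n_def)
  from \<open>\<forall>n\<ge>N. between n \<gamma>\<close> n(2) have "between n \<gamma>" by blast
  then obtain c c'
    where c: "\<forall>j. 0 \<le> c j" "cartan_solves d C n c (\<lambda>i. wt n lam1 i - wt n \<gamma> i)"
      and c': "\<forall>j. 0 \<le> c' j" "cartan_solves d C n c' (\<lambda>i. wt n \<gamma> i - wt n lam2 i)"
    unfolding between_def Qge_iff_cartan_solves by blast
  have gap: "wt n \<gamma> i = 0" if "xcut \<le> i" "i \<le> n - ycut" for i
    using weight_vanishes_between_cuts[OF n(1) wt_nonneg[OF \<gamma>(1)] c c' that] .
  have "fst \<gamma> j = 0" if "xcut \<le> j" for j
  proof (cases "seqlen (fst \<gamma>) < j")
    case False
    then have "j \<in> {1..n}" "j \<le> n - ycut" using that d_less_xcut large by auto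
    then show ?thesis using gap[of j] that wt_eq_0_iff[OF \<gamma>(1)] by blast
  qed (use seqlen_less_imp_zero[OF \<gamma>(2)] in blast)
  moreover have "snd \<gamma> j = 0" if "ycut < j" for j
  proof (cases "seqlen (snd \<gamma>) < j")
    case False
    then have "n + 1 - j \<in> {1..n}" "xcut \<le> n + 1 - j" "n + 1 - j \<le> n - ycut" "n + 1 - (n + 1 - j) = j"
      using that large by auto
    then show ?thesis using gap[of "n + 1 - j"] wt_eq_0_iff[OF \<gamma>(1)] by metis
  qed (use seqlen_less_imp_zero[OF \<gamma>(3)] in blast)
  ultimately show ?thesis using \<gamma>(1) by (simp add: within_cuts_def)
qed

lemma Ival_between:
  assumes "\<gamma> \<in> Ival d C lam1 lam2" "stable_from \<le> n"
  shows "between n \<gamma>"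
proof -
  obtain N where "\<forall>n\<ge>N. between n \<gamma>"
    using Ival_eventually_between[OF assms(1)] .
  then have "between (max N stable_from) \<gamma>" by simp
  moreover note within = Ival_within_cuts[OF assms(1)]
  ultimately have "between stable_from \<gamma>"
    using between_iff_stable_from[of "max N stable_from"] by simp
  then show ?thesis using between_iff_stable_from[OF assms(2) within] by simp
qed

lemma Ival_intro:
  assumes "within_cuts \<gamma>" "between stable_from \<gamma>"
  shows "\<gamma> \<in> Ival d C lam1 lam2"
proof -
  have "\<forall>n\<ge>stable_from. between n \<gamma>"
    using between_iff_stable_from[OF _ assms(1)] assms(2) by blast
  then show ?thesis
    using assms hnorm_eq_if_between[OF assms] hnorm_eq
    by (auto simp: Ival_def Hge_def between_def within_cuts_def)
qed

lemma Ivaln_eq: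
  assumes n: "stable_from \<le> n"
  shows "Ivaln d C n lam1 lam2 = wt n ` Ival d C lam1 lam2"
proof
  show "wt n ` Ival d C lam1 lam2 \<subseteq> Ivaln d C n lam1 lam2"
    using Ival_between[OF _ n] dominant_wt
    by (auto simp: Ivaln_def Ival_def between_def)
  show "Ivaln d C n lam1 lam2 \<subseteq> wt n ` Ival d C lam1 lam2"
  proof
    fix \<beta> assume "\<beta> \<in> Ivaln d C n lam1 lam2"
    then have dom: "dominant n \<beta>" and "Qge d C n (wt n lam1) \<beta>" "Qge d C n \<beta> (wt n lam2)"
      by (auto simp: Ivaln_def)
    then obtain c c' where c: "\<forall>j. 0 \<le> c j" "cartan_solves d C n c (\<lambda>i. wt n lam1 i - \<beta> i)"
      and c': "\<forall>j. 0 \<le> c' j" "cartan_solves d C n c' (\<lambda>i. \<beta> i - wt n lam2 i)"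
      unfolding Qge_iff_cartan_solves by blast
    have nonneg: "\<And>i. i \<in> {1..n} \<Longrightarrow> 0 \<le> \<beta> i" using dom by (simp add: dominant_def)
    have \<beta>: "wt n (cut_of n \<beta>) = \<beta>"
      using wt_cut_of[OF dom weight_vanishes_between_cuts[OF n nonneg c c'] cuts_le[OF n]] .
    have "within_cuts (cut_of n \<beta>)"
      using within_cuts_cut_of[OF nonneg cuts_le[OF n]] .
    moreover have "between n (cut_of n \<beta>)"
      unfolding between_def \<beta> using \<open>Qge d C n (wt n lam1) \<beta>\<close> \<open>Qge d C n \<beta> (wt n lam2)\<close> ..
    ultimately have "cut_of n \<beta> \<in> Ival d C lam1 lam2"
      using Ival_intro between_iff_stable_from[OF n] by blast
    then have "wt n (cut_of n \<beta>) \<in> wt n ` Ival d C lam1 lam2" by (rule imageI)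
    then show "\<beta> \<in> wt n ` Ival d C lam1 lam2" by (simp only: \<beta>)
  qed
qed

lemma finite_Ival: "finite (Ival d C lam1 lam2)"
proof -
  have "Ival d C lam1 lam2 \<subseteq> cut_of stable_from ` wt stable_from ` Ival d C lam1 lam2"
  proof
    fix \<gamma> assume "\<gamma> \<in> Ival d C lam1 lam2"
    then show "\<gamma> \<in> cut_of stable_from ` wt stable_from ` Ival d C lam1 lam2"
      using cut_of_wt[OF Ival_within_cuts cuts_le[OF order_refl]] by (metis imageI)
  qed
  moreover have "finite (Ivaln d C stable_from lam1 lam2)"
    by (rule finite_Ivaln) (rule Xdet_nonzero[OF order_refl])
  ultimately show ?thesis
    unfolding Ivaln_eq[OF order_refl] by (meson finite_imageI finite_subset)
qed

end

theorem lemma5p1: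
  fixes d :: nat and C :: "nat \<Rightarrow> nat \<Rightarrow> int"
    and lam1 lam2 :: "(nat \<Rightarrow> int) \<times> (nat \<Rightarrow> int)"
  assumes "d \<ge> 1" and "gcm d C" and "symmetrizable d C" and "extensible d C"
    and "lam1 \<in> H2p" and "lam2 \<in> H2p" and "Hge d C lam1 lam2"
  shows "finite (Ival d C lam1 lam2)
    \<and> (\<exists>N. \<forall>n\<ge>N. Ivaln d C n lam1 lam2 = (\<lambda>g. wt n g) ` Ival d C lam1 lam2)"
proof -
  interpret interval_data d C lam1 lam2
    using assms by unfold_locales (auto simp: extensible_def Hge_def)
  show ?thesis using finite_Ival Ivaln_eq by blast
qed

end
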